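(* Let $G$ be a finite group with $c(G)$ conjugacy classes. Then $Spec_3(G)=\{\frac{c(G)}{|G|},1\}$. More precisely, $Pr(a_1a_2a_3=a_{\pi_1}a_{\pi_2}a_{\pi_3})=\frac{c(G)}{|G|}$ for every non-identity $\pi\in S_3$, where $a_1,a_2,a_3$ are independent uniformly random elements of $G$.
   Context: Permutations are written in one-line notation $\pi=\langle\pi_1\dots\pi_n\rangle$, with $\pi_i=\pi(i)$. For a finite group $G$, $Pr_\pi(G)$ is the probability that $a_1\cdots a_n=a_{\pi_1}\cdots a_{\pi_n}$ for independent uniformly random $a_1,\dots,a_n\in G$. $Spec_n(G)$ is the set $\{Pr_\pi(G):\pi\in S_n\}$. $c(G)$ denotes the number of conjugacy classes of $G$. *)

theory Defs
  imports Complex_Main "HOL-Algebra.Group" "HOL-Combinatorics.Permutations" "HOL-Library.FuncSet"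
begin

definition conj_class :: "('a, 'b) monoid_scheme \<Rightarrow> 'a \<Rightarrow> 'a set" where
  "conj_class G x = {g \<otimes>\<^bsub>G\<^esub> x \<otimes>\<^bsub>G\<^esub> inv\<^bsub>G\<^esub> g | g. g \<in> carrier G}"

definition num_conj_classes :: "('a, 'b) monoid_scheme \<Rightarrow> nat" where
  "num_conj_classes G = card (conj_class G ` carrier G)"

fun tuple_prod :: "('a, 'b) monoid_scheme \<Rightarrow> (nat \<Rightarrow> 'a) \<Rightarrow> nat \<Rightarrow> 'a" where
  "tuple_prod G a 0 = \<one>\<^bsub>G\<^esub>"
| "tuple_prod G a (Suc n) = tuple_prod G a n \<otimes>\<^bsub>G\<^esub> a n"

text \<open>Pr_pi(G) for a permutation pi of {0..<n} (0-indexed version of S_n):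
  probability that a_0...a_(n-1) = a_(pi 0) ... a_(pi (n-1)) for uniform independent a_i.\<close>
definition perm_prob :: "('a, 'b) monoid_scheme \<Rightarrow> nat \<Rightarrow> (nat \<Rightarrow> nat) \<Rightarrow> real" where
  "perm_prob G n \<pi> =
     real (card {a \<in> {..<n} \<rightarrow>\<^sub>E carrier G. tuple_prod G a n = tuple_prod G (a \<circ> \<pi>) n})
     / real (card (carrier G)) ^ n"

definition Spec :: "('a, 'b) monoid_scheme \<Rightarrow> nat \<Rightarrow> real set" where
  "Spec G n = perm_prob G n ` {\<pi>. \<pi> permutes {..<n}}"

end

theory Submission
  imports Defs "HOL-Algebra.Group_Action"
begin

text \<open>Burnside's lemma for the conjugation action gives \<open>|{(x,y). xy = yx}| = c(G)|G|\<close>.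
  For a non-identity permutation of three letters, the condition \<open>xyz = x\<^sub>\<pi> y\<^sub>\<pi> z\<^sub>\<pi>\<close>
  says that two words in \<open>x, y, z\<close> commute, and a shear of \<open>G\<^sup>3\<close> turns these words into
  independent coordinates: e.g. \<open>xyz = zyx\<close> iff \<open>yx\<close> commutes with \<open>x\<inverse>z\<close>, and
  \<open>(x,y,z) \<mapsto> (x, yx, x\<inverse>z)\<close> is a bijection. So each condition holds for \<open>|G| c(G) |G|\<close>
  of the \<open>|G|\<^sup>3\<close> triples.\<close>

definition commuting_pairs :: "('a, 'b) monoid_scheme \<Rightarrow> ('a \<times> 'a) set" where
  "commuting_pairs G =
     {(x, y). x \<in> carrier G \<and> y \<in> carrier G \<and> x \<otimes>\<^bsub>G\<^esub> y = y \<otimes>\<^bsub>G\<^esub> x}"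

lemma card_PiE_three:
  "card {a \<in> {..<3::nat} \<rightarrow>\<^sub>E A. P (a 0) (a 1) (a 2)}
    = card {(x, y, z). x \<in> A \<and> y \<in> A \<and> z \<in> A \<and> P x y z}"
proof (rule bij_betw_same_card[where f = "\<lambda>a. (a 0, a 1, a 2)"],
       rule bij_betw_byWitness[where f' = "\<lambda>(x, y, z). (\<lambda>i. if i = 0 then x else if i = 1 then y
                                                     else if i = 2 then z else undefined)"])
  show "\<forall>a \<in> {a \<in> {..<3::nat} \<rightarrow>\<^sub>E A. P (a 0) (a 1) (a 2)}.
      (\<lambda>(x, y, z). \<lambda>i. if i = 0 then x else if i = 1 then y else if i = 2 then z else undefined)
        (a 0, a 1, a 2) = a"
    by (auto simp: fun_eq_iff PiE_def extensional_def eval_nat_numeral less_Suc_eq)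
qed (auto simp: PiE_def extensional_def)

lemma permutes_three_non_id_cases:
  assumes perm: "\<pi> permutes {..<3::nat}" and "\<pi> \<noteq> id"
  shows "(\<pi> 0, \<pi> 1, \<pi> 2) \<in> {(1, 0, 2), (0, 2, 1), (1, 2, 0), (2, 0, 1), (2, 1, 0)}"
proof -
  have range: "\<pi> i = 0 \<or> \<pi> i = 1 \<or> \<pi> i = 2" if "i < 3" for i
    using permutes_in_image[OF perm, of i] that by (auto simp: eval_nat_numeral less_Suc_eq)
  have "\<pi> 0 \<noteq> \<pi> 1" "\<pi> 0 \<noteq> \<pi> 2" "\<pi> 1 \<noteq> \<pi> 2"
    using permutes_inj[OF perm] by (simp_all add: inj_eq)
  moreover have "\<not> (\<pi> 0 = 0 \<and> \<pi> 1 = 1 \<and> \<pi> 2 = 2)"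
  proof
    assume fixes_all: "\<pi> 0 = 0 \<and> \<pi> 1 = 1 \<and> \<pi> 2 = 2"
    have "\<pi> i = i" for i
      using fixes_all permutes_not_in[OF perm, of i]
      by (cases "i < 3") (auto simp: eval_nat_numeral less_Suc_eq)
    with \<open>\<pi> \<noteq> id\<close> show False
      by auto
  qed
  moreover have "\<pi> 0 = 0 \<or> \<pi> 0 = 1 \<or> \<pi> 0 = 2" "\<pi> 1 = 0 \<or> \<pi> 1 = 1 \<or> \<pi> 1 = 2"
    "\<pi> 2 = 0 \<or> \<pi> 2 = 1 \<or> \<pi> 2 = 2"
    by (rule range, simp)+
  ultimately show ?thesis
    by (elim disjE) simp_all
qed

lemma (in monoid) tuple_prod_three:
  assumes "a 0 \<in> carrier G"
  shows "tuple_prod G a 3 = a 0 \<otimes> a 1 \<otimes> a 2"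
  using assms by (simp add: numeral_3_eq_3 numeral_2_eq_2)

context group
begin

lemma mult_inv_cancel_left [simp]:
  "\<lbrakk>x \<in> carrier G; y \<in> carrier G\<rbrakk> \<Longrightarrow> x \<otimes> (inv x \<otimes> y) = y"
  "\<lbrakk>x \<in> carrier G; y \<in> carrier G\<rbrakk> \<Longrightarrow> inv x \<otimes> (x \<otimes> y) = y"
  by (simp_all add: m_assoc[symmetric])

lemma card_commuting_pairs:
  assumes fin: "finite (carrier G)"
  shows "card (commuting_pairs G) = num_conj_classes G * order G"
proof -
  let ?\<phi> = "\<lambda>g. \<lambda>h \<in> carrier G. g \<otimes> h \<otimes> inv g"
  interpret group_action G "carrier G" ?\<phi> by (rule action_by_conjugation)
  have orbits_eq: "orbits G (carrier G) ?\<phi> = conj_class G ` carrier G"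
    unfolding orbits_def orbit_def conj_class_def by auto
  have invariants_eq: "invariants (carrier G) ?\<phi> g = {x \<in> carrier G. g \<otimes> x = x \<otimes> g}"
    if g: "g \<in> carrier G" for g
  proof -
    have "g \<otimes> x \<otimes> inv g = x \<longleftrightarrow> g \<otimes> x = x \<otimes> g" if "x \<in> carrier G" for x
      using g that by (metis inv_closed inv_solve_right m_closed)
    then show ?thesis
      unfolding invariants_def by auto
  qed
  have "commuting_pairs G = Sigma (carrier G) (\<lambda>g. {x \<in> carrier G. g \<otimes> x = x \<otimes> g})"
    unfolding commuting_pairs_def by auto
  then have "card (commuting_pairs G) = (\<Sum>g \<in> carrier G. card (invariants (carrier G) ?\<phi> g))"
    using fin invariants_eq by (simp add: card_SigmaI)
  also have "\<dots> = card (orbits G (carrier G) ?\<phi>) * order G"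
    using burnside[OF fin fin] by simp
  finally show ?thesis
    unfolding orbits_eq num_conj_classes_def .
qed

lemma card_triples_by_commuting_shear:
  assumes bij: "bij_betw h (carrier G \<times> carrier G \<times> carrier G) (carrier G \<times> carrier G \<times> carrier G)"
    and iff: "\<And>x y z. \<lbrakk>x \<in> carrier G; y \<in> carrier G; z \<in> carrier G\<rbrakk>
                \<Longrightarrow> P x y z \<longleftrightarrow> snd (h (x, y, z)) \<in> commuting_pairs G"
  shows "card {(x, y, z). x \<in> carrier G \<and> y \<in> carrier G \<and> z \<in> carrier G \<and> P x y z}
    = order G * card (commuting_pairs G)"
proof -
  let ?C3 = "carrier G \<times> carrier G \<times> carrier G"
  have "bij_betw h {t \<in> ?C3. case t of (x, y, z) \<Rightarrow> P x y z} {s \<in> ?C3. snd s \<in> commuting_pairs G}"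
    by (rule bij_betw_Collect[OF bij]) (auto simp: iff)
  then have "card {t \<in> ?C3. case t of (x, y, z) \<Rightarrow> P x y z} = card {s \<in> ?C3. snd s \<in> commuting_pairs G}"
    by (rule bij_betw_same_card)
  also have "{s \<in> ?C3. snd s \<in> commuting_pairs G} = carrier G \<times> commuting_pairs G"
    by (auto simp: commuting_pairs_def)
  also have "{t \<in> ?C3. case t of (x, y, z) \<Rightarrow> P x y z}
      = {(x, y, z). x \<in> carrier G \<and> y \<in> carrier G \<and> z \<in> carrier G \<and> P x y z}"
    by auto
  finally show ?thesis
    by (simp add: card_cartesian_product order_def)
qed

lemma card_triples_permuted_product:
  shows "card {(x, y, z). x \<in> carrier G \<and> y \<in> carrier G \<and> z \<in> carrier G \<and> x \<otimes> y \<otimes> z = y \<otimes> x \<otimes> z}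
      = order G * card (commuting_pairs G)"
    and "card {(x, y, z). x \<in> carrier G \<and> y \<in> carrier G \<and> z \<in> carrier G \<and> x \<otimes> y \<otimes> z = x \<otimes> z \<otimes> y}
      = order G * card (commuting_pairs G)"
    and "card {(x, y, z). x \<in> carrier G \<and> y \<in> carrier G \<and> z \<in> carrier G \<and> x \<otimes> y \<otimes> z = y \<otimes> z \<otimes> x}
      = order G * card (commuting_pairs G)"
    and "card {(x, y, z). x \<in> carrier G \<and> y \<in> carrier G \<and> z \<in> carrier G \<and> x \<otimes> y \<otimes> z = z \<otimes> x \<otimes> y}
      = order G * card (commuting_pairs G)"
    and "card {(x, y, z). x \<in> carrier G \<and> y \<in> carrier G \<and> z \<in> carrier G \<and> x \<otimes> y \<otimes> z = z \<otimes> y \<otimes> x}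
      = order G * card (commuting_pairs G)"
proof -
  let ?C3 = "carrier G \<times> carrier G \<times> carrier G"
  show "card {(x, y, z). x \<in> carrier G \<and> y \<in> carrier G \<and> z \<in> carrier G \<and> x \<otimes> y \<otimes> z = y \<otimes> x \<otimes> z}
      = order G * card (commuting_pairs G)"
  proof (rule card_triples_by_commuting_shear)
    show "bij_betw (\<lambda>(x, y, z). (z, x, y)) ?C3 ?C3"
      by (rule bij_betw_byWitness[where f' = "\<lambda>(z, x, y). (x, y, z)"]) auto
  qed (auto simp: commuting_pairs_def)
  show "card {(x, y, z). x \<in> carrier G \<and> y \<in> carrier G \<and> z \<in> carrier G \<and> x \<otimes> y \<otimes> z = x \<otimes> z \<otimes> y}
      = order G * card (commuting_pairs G)"
  proof (rule card_triples_by_commuting_shear)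
    show "bij_betw id ?C3 ?C3"
      by simp
  qed (auto simp: commuting_pairs_def m_assoc)
  show "card {(x, y, z). x \<in> carrier G \<and> y \<in> carrier G \<and> z \<in> carrier G \<and> x \<otimes> y \<otimes> z = y \<otimes> z \<otimes> x}
      = order G * card (commuting_pairs G)"
  proof (rule card_triples_by_commuting_shear)
    show "bij_betw (\<lambda>(x, y, z). (y, x, y \<otimes> z)) ?C3 ?C3"
      by (rule bij_betw_byWitness[where f' = "\<lambda>(y, x, w). (x, y, inv y \<otimes> w)"])
        (auto simp: m_assoc[symmetric])
  qed (auto simp: commuting_pairs_def m_assoc)
  show "card {(x, y, z). x \<in> carrier G \<and> y \<in> carrier G \<and> z \<in> carrier G \<and> x \<otimes> y \<otimes> z = z \<otimes> x \<otimes> y}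
      = order G * card (commuting_pairs G)"
  proof (rule card_triples_by_commuting_shear)
    show "bij_betw (\<lambda>(x, y, z). (x, x \<otimes> y, z)) ?C3 ?C3"
      by (rule bij_betw_byWitness[where f' = "\<lambda>(x, w, z). (x, inv x \<otimes> w, z)"])
        (auto simp: m_assoc[symmetric])
  qed (auto simp: commuting_pairs_def m_assoc)
  show "card {(x, y, z). x \<in> carrier G \<and> y \<in> carrier G \<and> z \<in> carrier G \<and> x \<otimes> y \<otimes> z = z \<otimes> y \<otimes> x}
      = order G * card (commuting_pairs G)"
  proof (rule card_triples_by_commuting_shear)
    show "bij_betw (\<lambda>(x, y, z). (x, y \<otimes> x, inv x \<otimes> z)) ?C3 ?C3"
      by (rule bij_betw_byWitness[where f' = "\<lambda>(x, w, u). (x, w \<otimes> inv x, x \<otimes> u)"])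
        (auto simp: m_assoc)
    fix x y z
    assume xyz: "x \<in> carrier G" "y \<in> carrier G" "z \<in> carrier G"
    have "y \<otimes> x \<otimes> (inv x \<otimes> z) = y \<otimes> z"
      using xyz by (simp add: m_assoc)
    moreover have "inv x \<otimes> z \<otimes> (y \<otimes> x) = inv x \<otimes> (z \<otimes> y \<otimes> x)"
      using xyz by (simp add: m_assoc)
    moreover have "y \<otimes> z = inv x \<otimes> (z \<otimes> y \<otimes> x) \<longleftrightarrow> z \<otimes> y \<otimes> x = x \<otimes> (y \<otimes> z)"
      using xyz by (simp add: inv_solve_left)
    ultimately show "x \<otimes> y \<otimes> z = z \<otimes> y \<otimes> x
        \<longleftrightarrow> snd ((\<lambda>(x, y, z). (x, y \<otimes> x, inv x \<otimes> z)) (x, y, z)) \<in> commuting_pairs G"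
      using xyz by (auto simp: commuting_pairs_def m_assoc)
  qed
qed

lemma card_permuted_product_three:
  assumes perm: "\<pi> permutes {..<3::nat}" and non_id: "\<pi> \<noteq> id"
  shows "card {a \<in> {..<3} \<rightarrow>\<^sub>E carrier G. tuple_prod G a 3 = tuple_prod G (a \<circ> \<pi>) 3}
    = order G * card (commuting_pairs G)"
proof -
  define P where "P x y z \<longleftrightarrow> x \<otimes> y \<otimes> z = [x, y, z] ! \<pi> 0 \<otimes> [x, y, z] ! \<pi> 1 \<otimes> [x, y, z] ! \<pi> 2"
    for x y z
  have "{a \<in> {..<3} \<rightarrow>\<^sub>E carrier G. tuple_prod G a 3 = tuple_prod G (a \<circ> \<pi>) 3}
      = {a \<in> {..<3} \<rightarrow>\<^sub>E carrier G. P (a 0) (a 1) (a 2)}"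
  proof (intro Collect_cong conj_cong refl)
    fix a :: "nat \<Rightarrow> 'a"
    assume a: "a \<in> {..<3} \<rightarrow>\<^sub>E carrier G"
    have nth_eq: "a (\<pi> i) = [a 0, a 1, a 2] ! \<pi> i" if "i < 3" for i
    proof -
      have "\<pi> i = 0 \<or> \<pi> i = 1 \<or> \<pi> i = 2"
        using permutes_in_image[OF perm, of i] that by (auto simp: eval_nat_numeral less_Suc_eq)
      then show ?thesis
        by auto
    qed
    have "\<pi> 0 \<in> {..<3}"
      using permutes_in_image[OF perm, of 0] by simp
    then have "a 0 \<in> carrier G" "a (\<pi> 0) \<in> carrier G"
      by (auto intro: PiE_mem[OF a])
    then show "tuple_prod G a 3 = tuple_prod G (a \<circ> \<pi>) 3 \<longleftrightarrow> P (a 0) (a 1) (a 2)"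
      by (simp add: tuple_prod_three P_def nth_eq)
  qed
  then have "card {a \<in> {..<3} \<rightarrow>\<^sub>E carrier G. tuple_prod G a 3 = tuple_prod G (a \<circ> \<pi>) 3}
      = card {(x, y, z). x \<in> carrier G \<and> y \<in> carrier G \<and> z \<in> carrier G \<and> P x y z}"
    by (simp only: card_PiE_three)
  also have "\<dots> = order G * card (commuting_pairs G)"
  proof -
    have "P = (\<lambda>x y z. x \<otimes> y \<otimes> z = y \<otimes> x \<otimes> z) \<or> P = (\<lambda>x y z. x \<otimes> y \<otimes> z = x \<otimes> z \<otimes> y) \<or>
        P = (\<lambda>x y z. x \<otimes> y \<otimes> z = y \<otimes> z \<otimes> x) \<or> P = (\<lambda>x y z. x \<otimes> y \<otimes> z = z \<otimes> x \<otimes> y) \<or>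
        P = (\<lambda>x y z. x \<otimes> y \<otimes> z = z \<otimes> y \<otimes> x)"
      using permutes_three_non_id_cases[OF perm non_id] by (auto simp: P_def fun_eq_iff)
    then show ?thesis
      by (elim disjE) (simp_all only: card_triples_permuted_product)
  qed
  finally show ?thesis .
qed

lemma perm_prob_three_non_id:
  assumes "finite (carrier G)" and "\<pi> permutes {..<3::nat}" and "\<pi> \<noteq> id"
  shows "perm_prob G 3 \<pi> = real (num_conj_classes G) / real (order G)"
proof -
  have "order G > 0"
    using assms(1) by (simp add: order_gt_0_iff_finite)
  moreover have "perm_prob G 3 \<pi> = real (order G * (num_conj_classes G * order G)) / real (order G) ^ 3"
    unfolding perm_prob_def card_permuted_product_three[OF assms(2,3)]
      card_commuting_pairs[OF assms(1)] order_def ..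
  ultimately show ?thesis
    by (simp add: field_simps power3_eq_cube)
qed

end

lemma perm_prob_id:
  assumes "finite (carrier G)" and "carrier G \<noteq> {}"
  shows "perm_prob G n id = 1"
  using assms by (simp add: perm_prob_def card_PiE)

theorem mainTheorem5:
  fixes G :: "('a, 'b) monoid_scheme"
  assumes "group G" and "finite (carrier G)"
  shows "Spec G 3 = {real (num_conj_classes G) / real (card (carrier G)), 1}
    \<and> (\<forall>\<pi>. \<pi> permutes {..<3} \<and> \<pi> \<noteq> id \<longrightarrow>
          perm_prob G 3 \<pi> = real (num_conj_classes G) / real (card (carrier G)))"
proof -
  interpret group G by fact
  let ?p = "real (num_conj_classes G) / real (card (carrier G))"
  have non_id: "perm_prob G 3 \<pi> = ?p" if "\<pi> permutes {..<3}" "\<pi> \<noteq> id" for \<pi>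
    using perm_prob_three_non_id[OF assms(2) that] by (simp add: order_def)
  have id: "perm_prob G 3 id = 1"
    by (rule perm_prob_id[OF assms(2) carrier_not_empty])
  have swap: "Transposition.transpose 0 1 permutes {..<3::nat}" "Transposition.transpose (0::nat) 1 \<noteq> id"
    by (rule permutes_swap_id; simp) (metis id_apply transpose_apply_first zero_neq_one)
  have "Spec G 3 = {?p, 1}"
  proof
    show "Spec G 3 \<subseteq> {?p, 1}"
      unfolding Spec_def using non_id id by auto
    show "{?p, 1} \<subseteq> Spec G 3"
      unfolding Spec_def using non_id[OF swap] id swap(1) permutes_id[of "{..<3::nat}"]
      by (auto intro!: image_eqI)
  qed
  with non_id show ?thesis
    by blast
qed

end
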